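(* Let $R$ be a nonempty set of permutations, and let $Rn$ be the set obtained by appending to each $\sigma\in R$ (of length $m$) the entry $m+1$. Let $$P(x)=\sum_{n\ge0}|\mathfrak S_n(1243,2143,R)|x^n,\qquad Q(x)=\sum_{n\ge0}|\mathfrak S_n(1243,2143,Rn)|x^n.$$ Then $$Q(x)=\frac{2-P(x)}{2-x-P(x)}.$$
   Context: $\mathfrak S_n(S)$ denotes the set of permutations of $\{1,\dots,n\}$ avoiding every pattern in the set $S$, where $\pi$ avoids $\sigma$ if no subsequence of $\pi$ has the same relative order as $\sigma$. For example, if $R=\{42531,4231,312\}$ then $Rn=\{425316,42315,3124\}$. *)

theory Defs
  imports "HOL-Computational_Algebra.Formal_Power_Series" "HOL-Library.Sublist"
begin

definition is_perm :: "nat list \<Rightarrow> bool" where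
  "is_perm xs \<longleftrightarrow> distinct xs \<and> set xs = {1..length xs}"

definition order_iso :: "nat list \<Rightarrow> nat list \<Rightarrow> bool" where
  "order_iso a b \<longleftrightarrow> length a = length b \<and>
     (\<forall>i < length a. \<forall>j < length a. (a ! i < a ! j) \<longleftrightarrow> (b ! i < b ! j))"

definition contains :: "nat list \<Rightarrow> nat list \<Rightarrow> bool" where
  "contains \<pi> \<sigma> \<longleftrightarrow> (\<exists>s. subseq s \<pi> \<and> order_iso s \<sigma>)"

definition avoids :: "nat list \<Rightarrow> nat list \<Rightarrow> bool" where
  "avoids \<pi> \<sigma> \<longleftrightarrow> \<not> contains \<pi> \<sigma>"

definition Av :: "nat \<Rightarrow> nat list set \<Rightarrow> nat list set" where
  "Av n S = {\<pi>. is_perm \<pi> \<and> length \<pi> = n \<and> (\<forall>\<sigma>\<in>S. avoids \<pi> \<sigma>)}"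

definition genfun :: "nat list set \<Rightarrow> rat fps" where
  "genfun S = Abs_fps (\<lambda>n. of_nat (card (Av n S)))"

definition append_max :: "nat list \<Rightarrow> nat list" where
  "append_max \<sigma> = \<sigma> @ [length \<sigma> + 1]"

end

(*
  A permutation avoids 1243 and 2143 iff no entry c has two entries to its left that both lie
  below some entry d < c to its right.  Let pi lie in S_n(1243, 2143, Rn) and let k be the
  position of its maximum n.  If k = 0, deleting n is a bijection onto S_(n-1)(1243, 2143, Rn),
  since a leading maximum takes part in no occurrence of a pattern whose first entry is not its
  maximum.  If k > 0, no two entries before n lie below an entry after n, so the prefix consists
  of its minimum t, which lies among the values of the suffix, and of k - 1 entries above all of
  them.  Hence pi is glued from the standardised prefix alpha and tau = t followed by the suffix,
  and pi avoids the patterns iff alpha lies in S_k(1243, 2143, R) and tau in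
  S_(n-k)(1243, 2143, Rn); alpha has to avoid R itself because the maximum n follows every
  entry of alpha.  Thus q_n = q_(n-1) + sum_(k=1..n-1) p_k q_(n-k), which says
  Q - 1 = x Q + (P - 1)(Q - 1), and this is the claimed identity.
*)

theory Submission
  imports Defs
begin

lemma subseq_set_subset: "subseq xs ys \<Longrightarrow> set xs \<subseteq> set ys"
  by (auto simp: subseq_conv_nths dest: in_set_nthsD)

lemma subseq_distinct: "subseq xs ys \<Longrightarrow> distinct ys \<Longrightarrow> distinct xs"
  by (auto simp: subseq_conv_nths)

lemma subseq_mapE:
  assumes "subseq s (map f xs)"
  obtains s0 where "s = map f s0" "subseq s0 xs"
  using assms by (metis nths_map subseq_conv_nths)

lemma subseq_pair:
  assumes "x \<in> set xs" "y \<in> set xs" "x \<noteq> y"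
  shows "subseq [x, y] xs \<or> subseq [y, x] xs"
  using assms
proof (induction xs)
  case (Cons z zs)
  consider "z = x" | "z = y" | "z \<noteq> x" "z \<noteq> y" by blast
  then show ?case
  proof cases
    case 1
    then show ?thesis using Cons.prems by (simp add: subseq_singleton_left)
  next
    case 2
    then show ?thesis using Cons.prems by (simp add: subseq_singleton_left)
  next
    case 3
    then have "x \<in> set zs" "y \<in> set zs" using Cons.prems by auto
    then have "subseq [x, y] zs \<or> subseq [y, x] zs" using Cons.IH Cons.prems(3) by blast
    then show ?thesis by (meson list_emb.list_emb_Cons)
  qed
qed simp

lemma subseq_snoc_append_left:
  assumes "subseq (s @ [x]) (xs @ ys)" "x \<notin> set ys"
  shows "subseq (s @ [x]) xs"
proof -
  obtain s1 s2 where "s @ [x] = s1 @ s2" "subseq s1 xs" "subseq s2 ys"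
    using assms(1) by (auto elim: subseq_appendE)
  moreover have "s2 = []"
  proof (rule ccontr)
    assume "s2 \<noteq> []"
    then have "x = last s2"
      using \<open>s @ [x] = s1 @ s2\<close> by (metis last_appendR last_snoc)
    then have "x \<in> set ys"
      using \<open>s2 \<noteq> []\<close> \<open>subseq s2 ys\<close> subseq_set_subset by (metis last_in_set subsetD)
    with assms(2) show False ..
  qed
  ultimately show ?thesis by simp
qed

lemma subseq_snoc_snocD:
  assumes "subseq (s @ [x]) (xs @ [y])"
  shows "subseq s xs"
proof -
  obtain s1 s2 where s: "s @ [x] = s1 @ s2" "subseq s1 xs" "subseq s2 [y]"
    using assms by (auto elim: subseq_appendE)
  have "s2 = [] \<or> s2 = [y]"
    using s(3) by (cases s2) (auto dest: list_emb_Nil2 split: if_splits)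
  then show ?thesis
  proof
    assume "s2 = []"
    then have "subseq (s @ [x]) xs" using s by simp
    then show ?thesis
      using subseq_rev_drop_many[OF subseq_order.refl, of s "[x]"] subseq_order.trans by blast
  next
    assume "s2 = [y]"
    then show ?thesis using s by simp
  qed
qed

lemma distinct_set_eq_singleton: "distinct xs \<Longrightarrow> set xs = {x} \<Longrightarrow> xs = [x]"
  by (cases xs) (auto simp: subset_singleton_iff)

lemma set_eq_atLeastAtMost_card:
  fixes L :: "nat set"
  assumes "finite L" "\<And>x z. x \<in> L \<Longrightarrow> 1 \<le> z \<Longrightarrow> z \<le> x \<Longrightarrow> z \<in> L" "0 \<notin> L"
  shows "L = {1..card L}"
proof -
  have "x \<le> card L" if "x \<in> L" for x
  proof -
    have "{1..x} \<subseteq> L" using assms(2)[OF that] by auto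
    then have "card {1..x} \<le> card L" by (rule card_mono[OF assms(1)])
    then show ?thesis by simp
  qed
  moreover have "1 \<le> x" if "x \<in> L" for x
    using assms(3) that by (cases x) auto
  ultimately have "L \<subseteq> {1..card L}"
    by auto
  then show ?thesis
    by (simp add: card_subset_eq)
qed

lemma is_permI:
  assumes "distinct xs" "set xs \<subseteq> {1..length xs}"
  shows "is_perm xs"
  using assms by (simp add: is_perm_def card_subset_eq distinct_card)

lemma finite_Av: "finite (Av n S)"
proof (rule finite_subset)
  show "Av n S \<subseteq> {xs. set xs \<subseteq> {1..n} \<and> length xs = n}"
    by (auto simp: Av_def is_perm_def)
qed (simp add: finite_lists_length_eq)

lemma Av_0: "[] \<notin> S \<Longrightarrow> Av 0 S = {[]}"
  by (auto simp: Av_def is_perm_def avoids_def contains_def order_iso_def dest: list_emb_Nil2)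

section \<open>Pattern containment\<close>

lemma contains_subseq: "contains xs \<sigma> \<Longrightarrow> subseq xs ys \<Longrightarrow> contains ys \<sigma>"
  unfolding contains_def using subseq_order.trans by blast

lemma order_iso_map:
  assumes "strict_mono_on (set s) f"
  shows "order_iso (map f s) \<sigma> \<longleftrightarrow> order_iso s \<sigma>"
  using strict_mono_on_less[OF assms] by (simp add: order_iso_def)

lemma contains_map_strict_mono:
  assumes "strict_mono_on (set xs) f"
  shows "contains (map f xs) \<sigma> \<longleftrightarrow> contains xs \<sigma>"
proof
  assume "contains (map f xs) \<sigma>"
  then obtain s where "subseq s (map f xs)" "order_iso s \<sigma>"
    by (auto simp: contains_def)
  then obtain s0 where "s = map f s0" "subseq s0 xs" "order_iso (map f s0) \<sigma>"
    by (auto elim: subseq_mapE)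
  moreover have "strict_mono_on (set s0) f"
    using assms subseq_set_subset[OF \<open>subseq s0 xs\<close>] by (rule monotone_on_subset)
  ultimately show "contains xs \<sigma>"
    by (auto simp: contains_def order_iso_map)
next
  assume "contains xs \<sigma>"
  then obtain s where "subseq s xs" "order_iso s \<sigma>"
    by (auto simp: contains_def)
  moreover have "strict_mono_on (set s) f"
    using assms subseq_set_subset[OF \<open>subseq s xs\<close>] by (rule monotone_on_subset)
  ultimately show "contains (map f xs) \<sigma>"
    by (auto simp: contains_def order_iso_map intro: subseq_map)
qed

lemma order_iso_snoc_greater:
  assumes "\<forall>x\<in>set \<sigma>. x < w"
  shows "order_iso (s @ [v]) (\<sigma> @ [w]) \<longleftrightarrow> order_iso s \<sigma> \<and> (\<forall>x\<in>set s. x < v)"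
proof (cases "length s = length \<sigma>")
  case True
  have "\<forall>i<length \<sigma>. \<sigma> ! i < w" using assms by simp
  then show ?thesis
    using True unfolding order_iso_def
    by (auto simp: All_less_Suc nth_append) (metis in_set_conv_nth less_asym)+
qed (simp add: order_iso_def)

lemma contains_append_max_iff:
  assumes "is_perm \<sigma>"
  shows "contains \<pi> (append_max \<sigma>) \<longleftrightarrow>
    (\<exists>s v. subseq (s @ [v]) \<pi> \<and> order_iso s \<sigma> \<and> (\<forall>x\<in>set s. x < v))"
proof -
  have snoc_iso: "order_iso (s @ [v]) (append_max \<sigma>) \<longleftrightarrow> order_iso s \<sigma> \<and> (\<forall>x\<in>set s. x < v)" for s v
    using assms unfolding append_max_def is_perm_def
    by (intro order_iso_snoc_greater) auto
  have "order_iso s (append_max \<sigma>) \<Longrightarrow> s = butlast s @ [last s]" for s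
    by (cases s rule: rev_cases) (auto simp: order_iso_def append_max_def)
  then show ?thesis
    unfolding contains_def using snoc_iso by metis
qed

lemma contains_Cons_greater_iff:
  assumes "\<forall>x\<in>set \<beta>. x < n" "j < length \<sigma>" "\<sigma> ! 0 < \<sigma> ! j"
  shows "contains (n # \<beta>) \<sigma> \<longleftrightarrow> contains \<beta> \<sigma>"
proof
  assume "contains (n # \<beta>) \<sigma>"
  then obtain s where s: "subseq s (n # \<beta>)" "order_iso s \<sigma>"
    by (auto simp: contains_def)
  have "0 < length \<sigma>" using assms(2) by linarith
  then have "s ! 0 < s ! j" "j < length s"
    using s(2) assms(2,3) unfolding order_iso_def by metis+
  moreover have "j \<noteq> 0" using assms(3) by (metis less_irrefl)
  ultimately obtain y s' where "s = y # s'" "s' ! (j - 1) \<in> set s'" "y < s' ! (j - 1)"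
    by (cases s) (auto simp: nth_Cons')
  then have "subseq s \<beta>"
    using s(1) assms(1) subseq_set_subset by (cases "y = n") fastforce+
  then show "contains \<beta> \<sigma>"
    using s(2) by (auto simp: contains_def)
qed (auto intro: contains_subseq)

definition contains_1243_or_2143 :: "nat list \<Rightarrow> bool" where
  "contains_1243_or_2143 \<pi> \<longleftrightarrow> (\<exists>a b c d. subseq [a, b, c, d] \<pi> \<and> a < d \<and> b < d \<and> d < c)"

lemma order_iso_length4_iff:
  "order_iso [a, b, c, d] [w, x, y, z] \<longleftrightarrow>
    (a < b \<longleftrightarrow> w < x) \<and> (a < c \<longleftrightarrow> w < y) \<and> (a < d \<longleftrightarrow> w < z) \<and>
    (b < a \<longleftrightarrow> x < w) \<and> (b < c \<longleftrightarrow> x < y) \<and> (b < d \<longleftrightarrow> x < z) \<and>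
    (c < a \<longleftrightarrow> y < w) \<and> (c < b \<longleftrightarrow> y < x) \<and> (c < d \<longleftrightarrow> y < z) \<and>
    (d < a \<longleftrightarrow> z < w) \<and> (d < b \<longleftrightarrow> z < x) \<and> (d < c \<longleftrightarrow> z < y)"
  unfolding order_iso_def by (auto simp: All_less_Suc numeral_eq_Suc)

lemma contains_1243_or_2143_iff:
  assumes "distinct \<pi>"
  shows "contains_1243_or_2143 \<pi> \<longleftrightarrow> contains \<pi> [1,2,4,3] \<or> contains \<pi> [2,1,4,3]"
proof
  assume "contains_1243_or_2143 \<pi>"
  then obtain a b c d where s: "subseq [a, b, c, d] \<pi>" "a < d" "b < d" "d < c"
    by (auto simp: contains_1243_or_2143_def)
  then have "a \<noteq> b"
    using subseq_distinct[OF s(1) assms] by simp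
  then have "order_iso [a, b, c, d] [1,2,4,3] \<or> order_iso [a, b, c, d] [2,1,4,3]"
    using s(2-4) by (auto simp: order_iso_length4_iff)
  then show "contains \<pi> [1,2,4,3] \<or> contains \<pi> [2,1,4,3]"
    using s(1) by (auto simp: contains_def)
next
  assume "contains \<pi> [1,2,4,3] \<or> contains \<pi> [2,1,4,3]"
  then obtain s where s: "subseq s \<pi>" "order_iso s [1,2,4,3] \<or> order_iso s [2,1,4,3]"
    by (auto simp: contains_def)
  then obtain a b c d where "s = [a, b, c, d]"
    by (auto simp: order_iso_def numeral_eq_Suc length_Suc_conv)
  then show "contains_1243_or_2143 \<pi>"
    using s by (auto simp: contains_1243_or_2143_def order_iso_length4_iff)
qed

lemma contains_1243_or_2143_subseq:
  "contains_1243_or_2143 xs \<Longrightarrow> subseq xs ys \<Longrightarrow> contains_1243_or_2143 ys"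
  unfolding contains_1243_or_2143_def using subseq_order.trans by blast

lemma contains_1243_or_2143_map_strict_mono:
  assumes "strict_mono_on (set xs) f" "distinct xs"
  shows "contains_1243_or_2143 (map f xs) \<longleftrightarrow> contains_1243_or_2143 xs"
proof -
  have "distinct (map f xs)"
    using assms strict_mono_on_imp_inj_on by (auto simp: distinct_map)
  then show ?thesis
    using assms by (simp add: contains_1243_or_2143_iff contains_map_strict_mono)
qed

lemma Av_1243_2143_union_iff:
  assumes "is_perm \<pi>"
  shows "\<pi> \<in> Av (length \<pi>) ({[1,2,4,3], [2,1,4,3]} \<union> S) \<longleftrightarrow>
    \<not> contains_1243_or_2143 \<pi> \<and> (\<forall>\<sigma>\<in>S. avoids \<pi> \<sigma>)"
  using assms contains_1243_or_2143_iff[of \<pi>] by (auto simp: Av_def avoids_def is_perm_def)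

lemma not_two_below_after_max:
  assumes "\<not> contains_1243_or_2143 (xs @ n # ys)"
    and "x \<in> set xs" "y \<in> set xs" "x \<noteq> y" "d \<in> set ys" "d < n"
  shows "\<not> (x < d \<and> y < d)"
proof
  assume below: "x < d \<and> y < d"
  have nd: "subseq [n, d] (n # ys)"
    using assms(5) by (simp add: subseq_singleton_left)
  have occurrence: "subseq (p @ [n, d]) (xs @ n # ys)" if "subseq p xs" for p
    using list_emb_append_mono[OF that nd] by simp
  consider "subseq [x, y] xs" | "subseq [y, x] xs"
    using subseq_pair[OF assms(2-4)] by blast
  then show False
  proof cases
    case 1
    then have "subseq [x, y, n, d] (xs @ n # ys)" using occurrence by fastforce
    then show False using assms(1,6) below unfolding contains_1243_or_2143_def by blast
  next
    case 2
    then have "subseq [y, x, n, d] (xs @ n # ys)" using occurrence by fastforce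
    then show False using assms(1,6) below unfolding contains_1243_or_2143_def by blast
  qed
qed

section \<open>Gluing two permutations around a new maximum\<close>

definition glue_shift :: "nat list \<Rightarrow> nat \<Rightarrow> nat" where
  "glue_shift \<tau> x = (if x = 1 then hd \<tau> else x + length \<tau> - 1)"

definition glue :: "nat list \<Rightarrow> nat list \<Rightarrow> nat list" where
  "glue \<alpha> \<tau> = map (glue_shift \<tau>) \<alpha> @ (length \<alpha> + length \<tau>) # tl \<tau>"

lemma glue_nth_length: "glue \<alpha> \<tau> ! length \<alpha> = length \<alpha> + length \<tau>"
  by (simp add: glue_def nth_append)

locale glue_pair =
  fixes \<alpha> \<tau> :: "nat list"
  assumes perm_\<alpha>: "is_perm \<alpha>" and \<alpha>_ne: "\<alpha> \<noteq> []"
    and perm_\<tau>: "is_perm \<tau>" and \<tau>_ne: "\<tau> \<noteq> []"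
begin

lemma \<tau>_eq: "\<tau> = hd \<tau> # tl \<tau>"
  using \<tau>_ne by simp

lemma length_pos: "0 < length \<alpha>" "0 < length \<tau>"
  using \<alpha>_ne \<tau>_ne by auto

lemma set_\<alpha>: "set \<alpha> = {1..length \<alpha>}"
  using perm_\<alpha> by (simp add: is_perm_def)

lemma set_\<tau>: "set \<tau> = {1..length \<tau>}"
  using perm_\<tau> by (simp add: is_perm_def)

lemma hd_\<tau>_bounds: "1 \<le> hd \<tau>" "hd \<tau> \<le> length \<tau>"
  using set_\<tau> hd_in_set[OF \<tau>_ne] by auto

lemma hd_\<tau>_less: "hd \<tau> < length \<alpha> + length \<tau>"
  using hd_\<tau>_bounds(2) length_pos(1) by linarith

lemma set_tl_\<tau>: "set (tl \<tau>) = {1..length \<tau>} - {hd \<tau>}"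
proof -
  have "distinct (hd \<tau> # tl \<tau>)" "set (hd \<tau> # tl \<tau>) = {1..length \<tau>}"
    using perm_\<tau> \<tau>_eq unfolding is_perm_def by simp_all
  then show ?thesis by auto
qed

lemma glue_shift_strict_mono: "strict_mono_on (set \<alpha>) (glue_shift \<tau>)"
proof (rule strict_mono_onI)
  fix r s assume "r \<in> set \<alpha>" "s \<in> set \<alpha>" "r < s"
  then have "1 \<le> r" "2 \<le> s" by (auto simp: set_\<alpha>)
  then show "glue_shift \<tau> r < glue_shift \<tau> s"
    using \<open>r < s\<close> hd_\<tau>_bounds(2) by (auto simp: glue_shift_def)
qed

lemma set_map_glue_shift:
  "set (map (glue_shift \<tau>) \<alpha>) = insert (hd \<tau>) {length \<tau> + 1..<length \<alpha> + length \<tau>}"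
proof -
  have "set \<alpha> = insert 1 {2..length \<alpha>}"
    using atLeastAtMost_insertL[OF Suc_leI[OF length_pos(1)]]
    unfolding set_\<alpha> by (simp add: numeral_2_eq_2)
  then have "set (map (glue_shift \<tau>) \<alpha>) = insert (glue_shift \<tau> 1) (glue_shift \<tau> ` {2..length \<alpha>})"
    by simp
  also have "glue_shift \<tau> 1 = hd \<tau>"
    by (simp add: glue_shift_def)
  also have "glue_shift \<tau> ` {2..length \<alpha>} = (\<lambda>x. x + length \<tau> - 1) ` {2..length \<alpha>}"
    by (rule image_cong) (auto simp: glue_shift_def)
  also have "\<dots> = {length \<tau> + 1..<length \<alpha> + length \<tau>}"
  proof
    show "{length \<tau> + 1..<length \<alpha> + length \<tau>} \<subseteq> (\<lambda>x. x + length \<tau> - 1) ` {2..length \<alpha>}"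
    proof
      fix y assume y: "y \<in> {length \<tau> + 1..<length \<alpha> + length \<tau>}"
      show "y \<in> (\<lambda>x. x + length \<tau> - 1) ` {2..length \<alpha>}"
        by (rule rev_image_eqI[of "y + 1 - length \<tau>"]) (use y in auto)
    qed
  qed auto
  finally show ?thesis .
qed

lemma glue_eq: "glue \<alpha> \<tau> = (map (glue_shift \<tau>) \<alpha> @ [length \<alpha> + length \<tau>]) @ tl \<tau>"
  by (simp add: glue_def)

lemma glue_is_perm: "is_perm (glue \<alpha> \<tau>)"
proof (rule is_permI)
  have "distinct (map (glue_shift \<tau>) \<alpha>)"
    using perm_\<alpha> strict_mono_on_imp_inj_on[OF glue_shift_strict_mono]
    by (simp add: is_perm_def distinct_map)
  moreover have "distinct (tl \<tau>)"
    using perm_\<tau> by (simp add: is_perm_def distinct_tl)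
  ultimately show "distinct (glue \<alpha> \<tau>)"
    using hd_\<tau>_less \<alpha>_ne
    by (auto simp: glue_def set_map_glue_shift set_tl_\<tau> simp del: set_map)
  show "set (glue \<alpha> \<tau>) \<subseteq> {1..length (glue \<alpha> \<tau>)}"
    using hd_\<tau>_bounds \<tau>_ne
    by (auto simp: glue_def set_map_glue_shift set_tl_\<tau> length_tl simp del: set_map)
qed

lemma length_glue: "length (glue \<alpha> \<tau>) = length \<alpha> + length \<tau>"
  using \<tau>_ne by (simp add: glue_def length_tl)

lemma set_glue: "set (glue \<alpha> \<tau>) = {1..length \<alpha> + length \<tau>}"
  using glue_is_perm by (simp add: is_perm_def length_glue)

lemma filter_glue: "filter (\<lambda>x. x \<le> length \<tau>) (glue \<alpha> \<tau>) = \<tau>"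
proof -
  have "distinct (map (glue_shift \<tau>) \<alpha>)"
    using perm_\<alpha> strict_mono_on_imp_inj_on[OF glue_shift_strict_mono]
    by (simp add: is_perm_def distinct_map)
  moreover have "set (filter (\<lambda>x. x \<le> length \<tau>) (map (glue_shift \<tau>) \<alpha>)) = {hd \<tau>}"
    using hd_\<tau>_bounds by (auto simp: set_map_glue_shift simp del: set_map)
  ultimately have "filter (\<lambda>x. x \<le> length \<tau>) (map (glue_shift \<tau>) \<alpha>) = [hd \<tau>]"
    by (simp add: distinct_set_eq_singleton)
  moreover have "filter (\<lambda>x. x \<le> length \<tau>) (tl \<tau>) = tl \<tau>"
    by (simp add: set_tl_\<tau>)
  ultimately show ?thesis
    using \<tau>_eq \<alpha>_ne by (simp add: glue_def del: filter_map)
qed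

lemma subseq_\<tau>_glue: "subseq \<tau> (glue \<alpha> \<tau>)"
  by (metis filter_glue subseq_filter_left)

lemma subseq_map_glue_shift_glue:
  "subseq (map (glue_shift \<tau>) \<alpha> @ [length \<alpha> + length \<tau>]) (glue \<alpha> \<tau>)"
  unfolding glue_eq by (rule subseq_rev_drop_many) simp

lemma subseq_glue_snocD:
  assumes "subseq (s @ [x]) (glue \<alpha> \<tau>)" "x \<notin> set (tl \<tau>)"
  shows "subseq (s @ [x]) (map (glue_shift \<tau>) \<alpha> @ [length \<alpha> + length \<tau>])"
proof -
  have "subseq (s @ [x]) ((map (glue_shift \<tau>) \<alpha> @ [length \<alpha> + length \<tau>]) @ tl \<tau>)"
    using assms(1) by (simp only: glue_eq)
  then show ?thesis
    using assms(2) by (rule subseq_snoc_append_left)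
qed

lemma subseq_glue_bounded:
  assumes "subseq s (glue \<alpha> \<tau>)" "\<forall>x\<in>set s. x \<le> length \<tau>"
  shows "subseq s \<tau>"
proof -
  have "filter (\<lambda>x. x \<le> length \<tau>) s = s"
    using assms(2) by (simp add: filter_id_conv)
  then show ?thesis
    using subseq_filter[OF assms(1), of "\<lambda>x. x \<le> length \<tau>"] by (simp only: filter_glue)
qed

lemma glue_shift_le_length_eq_hd:
  "x \<in> set (map (glue_shift \<tau>) \<alpha>) \<Longrightarrow> x \<le> length \<tau> \<Longrightarrow> x = hd \<tau>"
  by (auto simp: set_map_glue_shift simp del: set_map)

lemma contains_1243_or_2143_glueD:
  assumes "contains_1243_or_2143 (glue \<alpha> \<tau>)"
  shows "contains_1243_or_2143 (map (glue_shift \<tau>) \<alpha>) \<or> contains_1243_or_2143 \<tau>"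
proof -
  let ?\<alpha>' = "map (glue_shift \<tau>) \<alpha>" and ?n = "length \<alpha> + length \<tau>"
  obtain a b c d where occ: "subseq [a, b, c, d] (glue \<alpha> \<tau>)" "a < d" "b < d" "d < c"
    using assms by (auto simp: contains_1243_or_2143_def)
  have "a \<noteq> b"
    using subseq_distinct[OF occ(1)] glue_is_perm by (auto simp: is_perm_def)
  have "c \<le> ?n"
    using subseq_set_subset[OF occ(1)] set_glue by (simp add: subset_iff)
  consider (left) "d \<notin> set (tl \<tau>)" | (right) "d \<in> set (tl \<tau>)" "c \<le> length \<tau>"
    | (straddling) "d \<in> set (tl \<tau>)" "length \<tau> < c"
    by fastforce
  then show ?thesis
  proof cases
    case left
    then have "subseq ([a, b, c] @ [d]) (?\<alpha>' @ [?n])"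
      using subseq_glue_snocD[of "[a, b, c]" d] occ(1) by simp
    moreover have "d \<notin> set [?n]"
      using occ(4) \<open>c \<le> ?n\<close> by simp
    ultimately have "subseq [a, b, c, d] ?\<alpha>'"
      using subseq_snoc_append_left[of "[a, b, c]" d ?\<alpha>' "[?n]"] by simp
    then show ?thesis
      using occ(2-4) unfolding contains_1243_or_2143_def by blast
  next
    case right
    then have "subseq [a, b, c, d] \<tau>"
      using subseq_glue_bounded[OF occ(1)] occ(2,3) set_tl_\<tau> by auto
    then show ?thesis
      using occ(2-4) unfolding contains_1243_or_2143_def by blast
  next
    case straddling
    have "subseq [a, b, c] [a, b, c, d]"
      by simp
    then have "subseq ([a, b] @ [c]) (glue \<alpha> \<tau>)"
      using occ(1) subseq_order.trans by fastforce
    then have "subseq ([a, b] @ [c]) (?\<alpha>' @ [?n])"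
      using straddling set_tl_\<tau> by (intro subseq_glue_snocD) auto
    then have "a \<in> set ?\<alpha>'" "b \<in> set ?\<alpha>'"
      using subseq_set_subset[OF subseq_snoc_snocD] by fastforce+
    moreover have "a \<le> length \<tau>" "b \<le> length \<tau>"
      using occ(2,3) straddling set_tl_\<tau> by auto
    ultimately have "a = hd \<tau>" "b = hd \<tau>"
      by (auto intro: glue_shift_le_length_eq_hd)
    with \<open>a \<noteq> b\<close> show ?thesis by simp
  qed
qed

lemma contains_1243_or_2143_glue_iff:
  "contains_1243_or_2143 (glue \<alpha> \<tau>) \<longleftrightarrow> contains_1243_or_2143 \<alpha> \<or> contains_1243_or_2143 \<tau>"
proof -
  have "contains_1243_or_2143 (map (glue_shift \<tau>) \<alpha>) \<longleftrightarrow> contains_1243_or_2143 \<alpha>"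
    using glue_shift_strict_mono perm_\<alpha>
    by (simp add: contains_1243_or_2143_map_strict_mono is_perm_def)
  moreover have "subseq (map (glue_shift \<tau>) \<alpha>) (glue \<alpha> \<tau>)"
    unfolding glue_def by (rule subseq_rev_drop_many) simp
  ultimately show ?thesis
    using contains_1243_or_2143_glueD contains_1243_or_2143_subseq subseq_\<tau>_glue by blast
qed

lemma contains_append_max_glueD:
  assumes "is_perm \<sigma>" "contains (glue \<alpha> \<tau>) (append_max \<sigma>)"
  shows "contains (map (glue_shift \<tau>) \<alpha>) \<sigma> \<or> contains \<tau> (append_max \<sigma>)"
proof -
  obtain s v where occ: "subseq (s @ [v]) (glue \<alpha> \<tau>)" "order_iso s \<sigma>" "\<forall>x\<in>set s. x < v"
    using assms(2) unfolding contains_append_max_iff[OF assms(1)] by blast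
  show ?thesis
  proof (cases "v \<in> set (tl \<tau>)")
    case True
    then have "\<forall>x\<in>set (s @ [v]). x \<le> length \<tau>"
      using occ(3) set_tl_\<tau> by fastforce
    then have "subseq (s @ [v]) \<tau>"
      using occ(1) by (intro subseq_glue_bounded)
    then show ?thesis
      unfolding contains_append_max_iff[OF assms(1)] using occ(2,3) by blast
  next
    case False
    then have "subseq (s @ [v]) (map (glue_shift \<tau>) \<alpha> @ [length \<alpha> + length \<tau>])"
      using occ(1) by (intro subseq_glue_snocD)
    then have "subseq s (map (glue_shift \<tau>) \<alpha>)"
      by (rule subseq_snoc_snocD)
    then show ?thesis
      using occ(2) by (auto simp: contains_def)
  qed
qed

lemma contains_append_max_glue_iff:
  assumes "is_perm \<sigma>"
  shows "contains (glue \<alpha> \<tau>) (append_max \<sigma>) \<longleftrightarrow> contains \<alpha> \<sigma> \<or> contains \<tau> (append_max \<sigma>)"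
proof -
  let ?\<alpha>' = "map (glue_shift \<tau>) \<alpha>" and ?n = "length \<alpha> + length \<tau>"
  have contains_\<alpha>': "contains ?\<alpha>' \<sigma> \<longleftrightarrow> contains \<alpha> \<sigma>"
    using glue_shift_strict_mono by (rule contains_map_strict_mono)
  have "contains (glue \<alpha> \<tau>) (append_max \<sigma>)" if "contains \<alpha> \<sigma>"
  proof -
    obtain s where s: "subseq s ?\<alpha>'" "order_iso s \<sigma>"
      using \<open>contains \<alpha> \<sigma>\<close> contains_\<alpha>' by (auto simp: contains_def)
    have "\<forall>x\<in>set s. x < ?n"
      using subseq_set_subset[OF s(1)] hd_\<tau>_less
      by (auto simp: set_map_glue_shift simp del: set_map)
    moreover have "subseq (s @ [?n]) (?\<alpha>' @ [?n])"
      using s(1) by simp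
    then have "subseq (s @ [?n]) (glue \<alpha> \<tau>)"
      using subseq_map_glue_shift_glue by (rule subseq_order.trans)
    ultimately show ?thesis
      unfolding contains_append_max_iff[OF assms] using s(2) by blast
  qed
  then show ?thesis
    using contains_append_max_glueD[OF assms] contains_\<alpha>' contains_subseq subseq_\<tau>_glue by blast
qed

lemma glue_in_Av_iff:
  assumes "\<forall>\<sigma>\<in>R. is_perm \<sigma>"
  shows "glue \<alpha> \<tau> \<in> Av (length \<alpha> + length \<tau>) ({[1,2,4,3], [2,1,4,3]} \<union> append_max ` R) \<longleftrightarrow>
    \<alpha> \<in> Av (length \<alpha>) ({[1,2,4,3], [2,1,4,3]} \<union> R) \<and>
    \<tau> \<in> Av (length \<tau>) ({[1,2,4,3], [2,1,4,3]} \<union> append_max ` R)"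
proof -
  have "(\<forall>\<sigma>\<in>append_max ` R. avoids (glue \<alpha> \<tau>) \<sigma>) \<longleftrightarrow>
      (\<forall>\<sigma>\<in>R. avoids \<alpha> \<sigma>) \<and> (\<forall>\<sigma>\<in>append_max ` R. avoids \<tau> \<sigma>)"
    using assms contains_append_max_glue_iff by (auto simp: avoids_def)
  then show ?thesis
    unfolding Av_1243_2143_union_iff[OF glue_is_perm, unfolded length_glue]
      Av_1243_2143_union_iff[OF perm_\<alpha>] Av_1243_2143_union_iff[OF perm_\<tau>]
      contains_1243_or_2143_glue_iff
    by blast
qed

end

lemma glue_inj:
  assumes "glue_pair \<alpha>1 \<tau>1" "glue_pair \<alpha>2 \<tau>2"
    and "length \<alpha>1 = length \<alpha>2" "length \<tau>1 = length \<tau>2" "glue \<alpha>1 \<tau>1 = glue \<alpha>2 \<tau>2"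
  shows "\<alpha>1 = \<alpha>2" "\<tau>1 = \<tau>2"
proof -
  show "\<tau>1 = \<tau>2"
    using glue_pair.filter_glue[OF assms(1)] glue_pair.filter_glue[OF assms(2)] assms(4,5) by metis
  have "map (glue_shift \<tau>1) \<alpha>1 = map (glue_shift \<tau>1) \<alpha>2"
    using assms(3,5) \<open>\<tau>1 = \<tau>2\<close> by (simp add: glue_def)
  moreover have "inj_on (glue_shift \<tau>1) (set \<alpha>1 \<union> set \<alpha>2)"
    using strict_mono_on_imp_inj_on[OF glue_pair.glue_shift_strict_mono[OF assms(1)]]
      glue_pair.set_\<alpha>[OF assms(1)] glue_pair.set_\<alpha>[OF assms(2)] assms(3)
    by simp
  ultimately show "\<alpha>1 = \<alpha>2"
    by (simp add: inj_on_map_eq_map)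
qed

lemma prefix_above_suffix:
  assumes perm: "is_perm (xs @ n # ys)" and n: "n = length xs + length ys + 1"
    and avoid: "\<not> contains_1243_or_2143 (xs @ n # ys)"
    and y: "y \<in> set xs" "y \<noteq> Min (set xs)" and d: "d \<in> set ys"
  shows "d < y"
proof -
  have "set xs \<noteq> {}"
    using y(1) by auto
  then have "Min (set xs) \<in> set xs" "Min (set xs) < y"
    using y by (auto simp: order_less_le)
  moreover have "d \<noteq> y" "d < n"
    using perm n y d by (auto simp: is_perm_def order_less_le)
  ultimately show ?thesis
    using not_two_below_after_max[OF avoid _ y(1) _ d] y(2) by fastforce
qed

lemma split_at_max_values:
  assumes perm: "is_perm (xs @ n # ys)" and n: "n = length xs + length ys + 1"
    and "\<not> contains_1243_or_2143 (xs @ n # ys)" and "xs \<noteq> []"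
  shows "set (Min (set xs) # ys) = {1..length ys + 1}"
    and "\<And>y. y \<in> set xs \<Longrightarrow> y \<noteq> Min (set xs) \<Longrightarrow> length ys + 1 < y"
proof -
  define t0 where "t0 = Min (set xs)"
  have t0: "t0 \<in> set xs" "\<And>y. y \<in> set xs \<Longrightarrow> t0 \<le> y"
    using \<open>xs \<noteq> []\<close> by (simp_all add: t0_def)
  have dist: "distinct (xs @ n # ys)" and vals: "set (xs @ n # ys) = {1..n}"
    using perm n by (simp_all add: is_perm_def)
  have below: "d < y" if "y \<in> set xs" "y \<noteq> t0" "d \<in> set ys" for y d
    using prefix_above_suffix[OF assms(1-3)] that unfolding t0_def by blast
  have "set (t0 # ys) = {1..card (set (t0 # ys))}"
  proof (rule set_eq_atLeastAtMost_card)
    fix x z assume x: "x \<in> set (t0 # ys)" and z: "1 \<le> z" "z \<le> x"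
    have "x < n" using x dist vals t0(1) by (auto simp: order_less_le)
    then have "z \<in> set (xs @ n # ys)" "z \<noteq> n"
      using vals z by auto
    moreover have "z \<notin> set xs - {t0}"
      using x z below t0(2) by (force simp: order_less_le)
    ultimately show "z \<in> set (t0 # ys)" by auto
  next
    have "set (t0 # ys) \<subseteq> {1..n}"
      unfolding vals[symmetric] using t0(1) by auto
    then show "0 \<notin> set (t0 # ys)" by auto
  qed simp
  moreover have "distinct (t0 # ys)"
    using dist t0(1) by auto
  ultimately show set_L: "set (Min (set xs) # ys) = {1..length ys + 1}"
    by (simp add: t0_def distinct_card)
  show "length ys + 1 < y" if "y \<in> set xs" "y \<noteq> Min (set xs)" for y
  proof -
    have "y \<in> set (xs @ n # ys)"
      using that(1) by simp
    then have "1 \<le> y"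
      unfolding vals by simp
    have "y \<notin> set (t0 # ys)"
      using that dist by (auto simp: t0_def)
    then have "y \<notin> {1..length ys + 1}"
      unfolding t0_def set_L .
    then show ?thesis
      using \<open>1 \<le> y\<close> by simp
  qed
qed

lemma glue_split_at_max:
  assumes perm: "is_perm (xs @ n # ys)" and n: "n = length xs + length ys + 1"
    and "\<not> contains_1243_or_2143 (xs @ n # ys)" and "xs \<noteq> []"
  obtains \<alpha> \<tau> where "glue_pair \<alpha> \<tau>" "length \<alpha> = length xs" "glue \<alpha> \<tau> = xs @ n # ys"
proof -
  define t0 m where "t0 = Min (set xs)" and "m = length ys + 1"
  have set_\<tau>: "set (t0 # ys) = {1..m}" and big: "\<And>y. y \<in> set xs \<Longrightarrow> y \<noteq> t0 \<Longrightarrow> m < y"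
    using split_at_max_values[OF assms] by (simp_all add: t0_def m_def)
  have dist: "distinct (xs @ n # ys)" and vals: "set (xs @ n # ys) = {1..n}"
    using perm n by (simp_all add: is_perm_def)
  define \<tau> where "\<tau> = t0 # ys"
  define g where "g y = (if y = t0 then 1 else y + 1 - m)" for y
  define \<alpha> where "\<alpha> = map g xs"
  have shift_g: "glue_shift \<tau> (g y) = y" if "y \<in> set xs" for y
    using big[OF that] by (auto simp: glue_shift_def g_def \<tau>_def m_def)
  have "is_perm \<tau>"
  proof (rule is_permI)
    have "t0 \<in> set xs" using \<open>xs \<noteq> []\<close> by (simp add: t0_def)
    then show "distinct \<tau>" using dist by (auto simp: \<tau>_def)
    show "set \<tau> \<subseteq> {1..length \<tau>}" using set_\<tau> by (simp add: \<tau>_def m_def)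
  qed
  moreover have "is_perm \<alpha>"
  proof (rule is_permI)
    show "distinct \<alpha>"
      using dist inj_on_inverseI[where f = g and g = "glue_shift \<tau>", OF shift_g]
      by (simp add: \<alpha>_def distinct_map)
    show "set \<alpha> \<subseteq> {1..length \<alpha>}"
    proof
      fix z assume "z \<in> set \<alpha>"
      then obtain y where y: "y \<in> set xs" "z = g y"
        by (auto simp: \<alpha>_def)
      show "z \<in> {1..length \<alpha>}"
      proof (cases "y = t0")
        case True
        then show ?thesis
          using y(2) \<open>xs \<noteq> []\<close> by (simp add: \<alpha>_def g_def Suc_le_eq)
      next
        case False
        have "y < n"
          using y(1) dist vals by (auto simp: order_less_le)
        then show ?thesis
          using big[OF y(1) False] y(2) False n by (auto simp: \<alpha>_def g_def m_def)
      qed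
    qed
  qed
  moreover have "map (glue_shift \<tau>) \<alpha> = xs"
    using shift_g by (simp add: \<alpha>_def map_idI)
  ultimately show thesis
    using that[of \<alpha> \<tau>] \<open>xs \<noteq> []\<close> n
    by (simp add: glue_pair_def glue_def \<alpha>_def \<tau>_def m_def)
qed

lemma glue_surj:
  assumes "is_perm \<pi>" "\<not> contains_1243_or_2143 \<pi>" "0 < k" "k < length \<pi>" "\<pi> ! k = length \<pi>"
  obtains \<alpha> \<tau> where "glue_pair \<alpha> \<tau>" "length \<alpha> = k" "glue \<alpha> \<tau> = \<pi>"
proof -
  define xs ys where "xs = take k \<pi>" and "ys = drop (Suc k) \<pi>"
  have "\<pi> = xs @ length \<pi> # ys"
    using assms(4,5) id_take_nth_drop unfolding xs_def ys_def by metis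
  moreover have "length xs = k" "length \<pi> = length xs + length ys + 1"
    using assms(4) by (auto simp: xs_def ys_def)
  moreover have "xs \<noteq> []"
    using \<open>length xs = k\<close> assms(3) by auto
  ultimately show thesis
    using glue_split_at_max[of xs "length \<pi>" ys] assms(1,2) that by metis
qed

section \<open>Counting\<close>

lemma Cons_in_Av_iff:
  assumes first: "\<forall>\<sigma>\<in>S. \<exists>j<length \<sigma>. \<sigma> ! 0 < \<sigma> ! j" and "0 < n"
  shows "n # \<beta> \<in> Av n S \<longleftrightarrow> \<beta> \<in> Av (n - 1) S"
proof -
  have "is_perm (n # \<beta>) \<and> length \<beta> = n - 1 \<longleftrightarrow> is_perm \<beta> \<and> length \<beta> = n - 1"
  proof (cases "length \<beta> = n - 1")
    case True
    then have "{1..length (n # \<beta>)} = insert n {1..length \<beta>}"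
      using \<open>0 < n\<close> by auto
    moreover have "n \<notin> {1..length \<beta>}"
      using True \<open>0 < n\<close> by simp
    ultimately show ?thesis
      unfolding is_perm_def by (metis Diff_insert_absorb distinct.simps(2) insert_absorb list.simps(15))
  qed simp
  moreover have "(\<forall>\<sigma>\<in>S. avoids (n # \<beta>) \<sigma>) \<longleftrightarrow> (\<forall>\<sigma>\<in>S. avoids \<beta> \<sigma>)"
    if "is_perm \<beta>" "length \<beta> = n - 1"
  proof -
    have "\<forall>x\<in>set \<beta>. x < n"
      using that \<open>0 < n\<close> by (auto simp: is_perm_def)
    then have "contains (n # \<beta>) \<sigma> \<longleftrightarrow> contains \<beta> \<sigma>" if "\<sigma> \<in> S" for \<sigma>
      using first that contains_Cons_greater_iff by blast
    then show ?thesis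
      unfolding avoids_def by blast
  qed
  ultimately show ?thesis
    using \<open>0 < n\<close> unfolding Av_def mem_Collect_eq by auto
qed

lemma card_Av_max_first:
  assumes "\<forall>\<sigma>\<in>S. \<exists>j<length \<sigma>. \<sigma> ! 0 < \<sigma> ! j" "0 < n"
  shows "card {\<pi> \<in> Av n S. \<pi> ! 0 = n} = card (Av (n - 1) S)"
proof -
  have "{\<pi> \<in> Av n S. \<pi> ! 0 = n} = Cons n ` Av (n - 1) S"
  proof (intro equalityI subsetI)
    fix \<pi> assume \<pi>: "\<pi> \<in> {\<pi> \<in> Av n S. \<pi> ! 0 = n}"
    then have "\<pi> = n # tl \<pi>"
      using \<open>0 < n\<close> by (cases \<pi>) (auto simp: Av_def)
    then show "\<pi> \<in> Cons n ` Av (n - 1) S"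
      using \<pi> Cons_in_Av_iff[OF assms, of "tl \<pi>"] by (metis (mono_tags) image_eqI mem_Collect_eq)
  qed (use Cons_in_Av_iff[OF assms] in auto)
  then show ?thesis
    by (simp add: card_image)
qed

lemma glue_pair_of_Av: "\<alpha> \<in> Av k S \<Longrightarrow> \<tau> \<in> Av m S' \<Longrightarrow> 0 < k \<Longrightarrow> 0 < m \<Longrightarrow> glue_pair \<alpha> \<tau>"
  by (auto simp: glue_pair_def Av_def)

lemma inj_on_glue_Av:
  assumes "0 < k" "k < n"
  shows "inj_on (\<lambda>(\<alpha>, \<tau>). glue \<alpha> \<tau>) (Av k S \<times> Av (n - k) S')"
proof (rule inj_onI)
  fix p q assume p: "p \<in> Av k S \<times> Av (n - k) S'" and q: "q \<in> Av k S \<times> Av (n - k) S'"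
    and eq: "(\<lambda>(\<alpha>, \<tau>). glue \<alpha> \<tau>) p = (\<lambda>(\<alpha>, \<tau>). glue \<alpha> \<tau>) q"
  obtain \<alpha>1 \<tau>1 \<alpha>2 \<tau>2 where pq: "p = (\<alpha>1, \<tau>1)" "q = (\<alpha>2, \<tau>2)"
    by (cases p, cases q)
  have factors: "\<alpha>1 \<in> Av k S" "\<tau>1 \<in> Av (n - k) S'" "\<alpha>2 \<in> Av k S" "\<tau>2 \<in> Av (n - k) S'"
    using p q unfolding pq by simp_all
  then have "length \<alpha>1 = length \<alpha>2" "length \<tau>1 = length \<tau>2"
    by (simp_all add: Av_def)
  moreover have "glue_pair \<alpha>1 \<tau>1" "glue_pair \<alpha>2 \<tau>2"
    using factors assms by (simp_all add: glue_pair_of_Av)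
  ultimately show "p = q"
    using glue_inj eq unfolding pq by simp
qed

lemma Av_max_at_eq_glue_image:
  assumes "\<forall>\<sigma>\<in>R. is_perm \<sigma>" "0 < k" "k < n"
  shows "{\<pi> \<in> Av n ({[1,2,4,3], [2,1,4,3]} \<union> append_max ` R). \<pi> ! k = n} =
    (\<lambda>(\<alpha>, \<tau>). glue \<alpha> \<tau>) `
      (Av k ({[1,2,4,3], [2,1,4,3]} \<union> R) \<times> Av (n - k) ({[1,2,4,3], [2,1,4,3]} \<union> append_max ` R))"
    (is "?A = (\<lambda>(\<alpha>, \<tau>). glue \<alpha> \<tau>) ` (Av k ?R \<times> Av (n - k) ?Q)")
proof (intro equalityI subsetI)
  fix \<pi> assume \<pi>: "\<pi> \<in> ?A"
  then have "is_perm \<pi>" "length \<pi> = n" "\<not> contains_1243_or_2143 \<pi>"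
    using Av_1243_2143_union_iff[of \<pi>] by (auto simp: Av_def)
  then obtain \<alpha> \<tau> where glued: "glue_pair \<alpha> \<tau>" "length \<alpha> = k" "glue \<alpha> \<tau> = \<pi>"
    using glue_surj[of \<pi> k] \<pi> assms(2,3) by auto
  have lengths: "length \<alpha> + length \<tau> = n"
    using glue_pair.length_glue[OF glued(1)] glued(3) \<open>length \<pi> = n\<close> by simp
  then have "glue \<alpha> \<tau> \<in> Av (length \<alpha> + length \<tau>) ?Q"
    using \<pi> glued(3) by simp
  then have "\<alpha> \<in> Av (length \<alpha>) ?R \<and> \<tau> \<in> Av (length \<tau>) ?Q"
    using glue_pair.glue_in_Av_iff[OF glued(1) assms(1)] by blast
  moreover have "length \<tau> = n - k"
    using lengths glued(2) by simp
  ultimately show "\<pi> \<in> (\<lambda>(\<alpha>, \<tau>). glue \<alpha> \<tau>) ` (Av k ?R \<times> Av (n - k) ?Q)"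
    using glued(2,3) by force
next
  fix \<pi> assume "\<pi> \<in> (\<lambda>(\<alpha>, \<tau>). glue \<alpha> \<tau>) ` (Av k ?R \<times> Av (n - k) ?Q)"
  then obtain \<alpha> \<tau> where factors: "\<alpha> \<in> Av k ?R" "\<tau> \<in> Av (n - k) ?Q" and "\<pi> = glue \<alpha> \<tau>"
    by auto
  have len: "length \<alpha> = k" "length \<tau> = n - k"
    using factors by (auto simp: Av_def)
  have "glue_pair \<alpha> \<tau>"
    using factors assms(2,3) by (simp add: glue_pair_of_Av)
  then have "glue \<alpha> \<tau> \<in> Av (length \<alpha> + length \<tau>) ?Q"
    unfolding glue_pair.glue_in_Av_iff[OF \<open>glue_pair \<alpha> \<tau>\<close> assms(1)] using factors len by simp
  moreover have "glue \<alpha> \<tau> ! k = n"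
    using glue_nth_length[of \<alpha> \<tau>] len assms(3) by simp
  ultimately show "\<pi> \<in> ?A"
    using \<open>\<pi> = glue \<alpha> \<tau>\<close> len assms(3) by simp
qed

lemma card_Av_max_at:
  assumes "\<forall>\<sigma>\<in>R. is_perm \<sigma>" "0 < k" "k < n"
  shows "card {\<pi> \<in> Av n ({[1,2,4,3], [2,1,4,3]} \<union> append_max ` R). \<pi> ! k = n} =
    card (Av k ({[1,2,4,3], [2,1,4,3]} \<union> R)) * card (Av (n - k) ({[1,2,4,3], [2,1,4,3]} \<union> append_max ` R))"
  using Av_max_at_eq_glue_image[OF assms] inj_on_glue_Av[OF assms(2,3)]
  by (simp add: card_image card_cartesian_product)

lemma card_Av_sum_max_position:
  assumes "0 < n"
  shows "card (Av n S) = (\<Sum>k<n. card {\<pi> \<in> Av n S. \<pi> ! k = n})"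
proof -
  have "Av n S = (\<Union>k<n. {\<pi> \<in> Av n S. \<pi> ! k = n})"
  proof (intro equalityI subsetI)
    fix \<pi> assume "\<pi> \<in> Av n S"
    then have "n \<in> set \<pi>" "length \<pi> = n"
      using assms by (auto simp: Av_def is_perm_def)
    then show "\<pi> \<in> (\<Union>k<n. {\<pi> \<in> Av n S. \<pi> ! k = n})"
      using \<open>\<pi> \<in> Av n S\<close> by (auto simp: in_set_conv_nth)
  qed auto
  moreover have "card (\<Union>k<n. {\<pi> \<in> Av n S. \<pi> ! k = n}) = (\<Sum>k<n. card {\<pi> \<in> Av n S. \<pi> ! k = n})"
  proof (rule card_UN_disjoint)
    show "\<forall>i\<in>{..<n}. \<forall>j\<in>{..<n}. i \<noteq> j \<longrightarrow>
        {\<pi> \<in> Av n S. \<pi> ! i = n} \<inter> {\<pi> \<in> Av n S. \<pi> ! j = n} = {}"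
      using nth_eq_iff_index_eq by (fastforce simp: Av_def is_perm_def)
  qed (simp_all add: finite_Av)
  ultimately show ?thesis
    by simp
qed

lemma card_Av_recurrence:
  assumes R: "\<forall>\<sigma>\<in>R. is_perm \<sigma> \<and> \<sigma> \<noteq> []" and "0 < n"
  shows "card (Av n ({[1,2,4,3], [2,1,4,3]} \<union> append_max ` R)) =
    card (Av (n - 1) ({[1,2,4,3], [2,1,4,3]} \<union> append_max ` R)) +
    (\<Sum>k=1..<n. card (Av k ({[1,2,4,3], [2,1,4,3]} \<union> R)) *
      card (Av (n - k) ({[1,2,4,3], [2,1,4,3]} \<union> append_max ` R)))"
proof -
  let ?Q = "{[1,2,4,3], [2,1,4,3]} \<union> append_max ` R" and ?R = "{[1,2,4,3], [2,1,4,3]} \<union> R"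
  have first: "\<forall>\<sigma>\<in>?Q. \<exists>j<length \<sigma>. \<sigma> ! 0 < \<sigma> ! j"
  proof
    fix \<sigma> assume "\<sigma> \<in> ?Q"
    then consider "\<sigma> = [1,2,4,3]" | "\<sigma> = [2,1,4,3]" | \<rho> where "\<rho> \<in> R" "\<sigma> = append_max \<rho>"
      by blast
    then show "\<exists>j<length \<sigma>. \<sigma> ! 0 < \<sigma> ! j"
    proof cases
      case 3
      then have "\<rho> ! 0 \<in> set \<rho>" "is_perm \<rho>"
        using R by auto
      then have "\<rho> ! 0 < length \<rho> + 1"
        by (auto simp: is_perm_def)
      then show ?thesis
        using 3 R by (intro exI[of _ "length \<rho>"]) (auto simp: append_max_def nth_append)
    qed (auto intro: exI[of _ 2])
  qed
  have "card (Av n ?Q) = (\<Sum>k<n. card {\<pi> \<in> Av n ?Q. \<pi> ! k = n})"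
    using \<open>0 < n\<close> by (rule card_Av_sum_max_position)
  also have "\<dots> = card {\<pi> \<in> Av n ?Q. \<pi> ! 0 = n} + (\<Sum>k=1..<n. card {\<pi> \<in> Av n ?Q. \<pi> ! k = n})"
    using \<open>0 < n\<close> by (simp add: lessThan_atLeast0 sum.atLeast_Suc_lessThan)
  also have "\<dots> = card (Av (n - 1) ?Q) + (\<Sum>k=1..<n. card (Av k ?R) * card (Av (n - k) ?Q))"
    using card_Av_max_first[OF first \<open>0 < n\<close>] card_Av_max_at[of R] R by simp
  finally show ?thesis .
qed

unbundle fps_syntax

lemma fps_eq_of_recurrence:
  fixes P Q :: "'a::field fps"
  assumes "P $ 0 = 1" "Q $ 0 = 1"
    and rec: "\<And>n. 0 < n \<Longrightarrow> Q $ n = Q $ (n - 1) + (\<Sum>k=1..<n. P $ k * Q $ (n - k))"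
  shows "Q = (2 - P) / (2 - fps_X - P)"
proof -
  have "Q - 1 = fps_X * Q + (P - 1) * (Q - 1)"
  proof (rule fps_ext)
    fix n :: nat
    show "(Q - 1) $ n = (fps_X * Q + (P - 1) * (Q - 1)) $ n"
    proof (cases "n = 0")
      case False
      have "((P - 1) * (Q - 1)) $ n = (\<Sum>k=0..n. (P - 1) $ k * (Q - 1) $ (n - k))"
        by (rule fps_mult_nth)
      also have "\<dots> = (\<Sum>k=1..<n. P $ k * Q $ (n - k))"
        using False assms(1,2)
        by (intro sum.mono_neutral_cong_right) (auto simp: not_less_eq_eq)
      finally show ?thesis
        using rec[of n] False by (simp add: fps_X_mult_nth)
    qed (simp add: assms fps_mult_nth)
  qed
  then have "Q * (2 - fps_X - P) = 2 - P"
    by (simp add: algebra_simps)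
  moreover have "2 - fps_X - P \<noteq> 0"
  proof
    assume "2 - fps_X - P = 0"
    then have "(2 - fps_X - P) $ 0 = 0" by simp
    then show False using assms(1) by simp
  qed
  ultimately show ?thesis
    by (metis fps_divide_times_eq mult.commute)
qed

theorem mainTheorem5:
  fixes R :: "nat list set"
  assumes "R \<noteq> {}"
    and "\<forall>\<sigma>\<in>R. is_perm \<sigma> \<and> length \<sigma> \<ge> 1"
  shows "genfun ({[1,2,4,3], [2,1,4,3]} \<union> append_max ` R)
       = (2 - genfun ({[1,2,4,3], [2,1,4,3]} \<union> R))
         / (2 - fps_X - genfun ({[1,2,4,3], [2,1,4,3]} \<union> R))"
proof -
  let ?Q = "{[1,2,4,3], [2,1,4,3]} \<union> append_max ` R" and ?R = "{[1,2,4,3], [2,1,4,3]} \<union> R"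
  have R: "\<forall>\<sigma>\<in>R. is_perm \<sigma> \<and> \<sigma> \<noteq> []"
    using assms(2) by auto
  then have "[] \<notin> ?R" "[] \<notin> ?Q"
    by (auto simp: append_max_def)
  then have "genfun ?R $ 0 = 1" "genfun ?Q $ 0 = 1"
    by (simp_all add: genfun_def Av_0)
  moreover have "genfun ?Q $ n = genfun ?Q $ (n - 1) + (\<Sum>k=1..<n. genfun ?R $ k * genfun ?Q $ (n - k))"
    if "0 < n" for n
    using card_Av_recurrence[OF R that] by (simp add: genfun_def)
  ultimately show ?thesis
    by (rule fps_eq_of_recurrence)
qed

end
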